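(* Let $0<q,r<\infty$ and let $u,v,w$ be weights on $(0,\infty)$. Let $\{x_k\}$ be the covering sequence associated with $u$ and $\mathcal Z$ its index set (as described in the context). Then $$\bigg( \int_0^{\infty} \bigg( \int_x^{\infty} \bigg( \int_t^{\infty} h \bigg)^q w(t)\,dt\bigg)^{r / q} u(x)\,dx \bigg)^{1/r} \approx \bigg\| \bigg\{ 2^{k / r} \bigg(\int_{x_k}^{x_{k+1}} \bigg( \int_s^{x_{k+1}} h \bigg)^q w(s)\,ds\bigg)^{ 1 / q} \bigg\} \bigg\|_{\ell^r(\mathcal Z)} + \bigg\| \bigg\{ \bigg( \int_{x_{k-1}}^{x_k} u(t) \sup_{t < s \le x_{k+1}} \bigg(\int_{x_k}^s w \bigg)^{r / q} \bigg( \int_s^{\infty} h\bigg)^r \,dt\bigg)^{1/r} \bigg\} \bigg\|_{\ell^r(\mathcal Z)}$$ with constants independent of $h\in\mathfrak M^+(0,\infty)$.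
   Context: $\mathfrak M^+(0,\infty)$: non-negative measurable functions on $(0,\infty)$. A weight is $v\in\mathfrak M^+(0,\infty)$ with $0<\int_0^x v<\infty$ for all $x>0$. Covering sequence: if $\int_0^\infty u=\infty$, $\{x_k\}_{k\in\mathbb Z}$ is the strictly increasing sequence with $\int_0^{x_k}u=2^k$, and $\mathcal Z=\mathbb Z$. If $\int_0^\infty u<\infty$, let $M\in\mathbb Z$ satisfy $2^M\le\int_0^\infty u<2^{M+1}$, let $\int_0^{x_k}u=2^k$ for $k\le M$, $x_{M+1}=\infty$, and $\mathcal Z=\{k\in\mathbb Z: k\le M\}$. For a sequence $\{a_k\}_{k\in\mathcal Z}$, $\|\{a_k\}\|_{\ell^r(\mathcal Z)}=(\sum_{k\in\mathcal Z}|a_k|^r)^{1/r}$. $A\approx B$ means two-sided inequality with constants depending only on $q,r$. *)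

theory Defs
  imports "HOL-Analysis.Analysis"
begin

definition intv :: "ereal \<Rightarrow> ereal \<Rightarrow> real set" where
  "intv a b = {t. a < ereal t \<and> ereal t < b}"

definition Int_ab :: "(real \<Rightarrow> ennreal) \<Rightarrow> ereal \<Rightarrow> ereal \<Rightarrow> ennreal" where
  "Int_ab f a b = (\<integral>\<^sup>+ t. f t * indicator (intv a b) t \<partial>lebesgue)"

definition epow :: "ennreal \<Rightarrow> real \<Rightarrow> ennreal" where
  "epow x p = (if x = \<infinity> then \<infinity> else ennreal (enn2real x powr p))"

definition weight :: "(real \<Rightarrow> ennreal) \<Rightarrow> bool" where
  "weight v \<longleftrightarrow> v \<in> borel_measurable lebesgue \<and>
     (\<forall>x>0. 0 < Int_ab v 0 (ereal x) \<and> Int_ab v 0 (ereal x) < \<infinity>)"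

definition covering_seq :: "(real \<Rightarrow> ennreal) \<Rightarrow> (int \<Rightarrow> ereal) \<Rightarrow> int set \<Rightarrow> bool" where
  "covering_seq u x Z \<longleftrightarrow>
     (if Int_ab u 0 \<infinity> = \<infinity>
      then Z = UNIV \<and> (\<forall>k. 0 < x k \<and> x k < \<infinity> \<and> Int_ab u 0 (x k) = ennreal (2 powr real_of_int k))
      else (\<exists>M::int. ennreal (2 powr real_of_int M) \<le> Int_ab u 0 \<infinity>
              \<and> Int_ab u 0 \<infinity> < ennreal (2 powr real_of_int (M + 1))
              \<and> Z = {..M}
              \<and> (\<forall>k\<le>M. 0 < x k \<and> x k < \<infinity> \<and> Int_ab u 0 (x k) = ennreal (2 powr real_of_int k))
              \<and> x (M + 1) = \<infinity>))"

definition lr_norm :: "real \<Rightarrow> int set \<Rightarrow> (int \<Rightarrow> ennreal) \<Rightarrow> ennreal" where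
  "lr_norm r Z a = epow (\<Sum>\<^sub>\<infinity> k\<in>Z. epow (a k) r) (1 / r)"

end

theory Submission
  imports Defs
begin

text \<open>
Write $p = r/q$, $H(s) = \int_s^\infty h$ and $F(y) = \int_y^\infty H^q w$, so that the left-hand side is
$(\int_0^\infty F^p u)^{1/r}$. On the block $(x_{k-1}, x_k)$ the weight $u$ has mass $2^{k-1}$ and
$F \ge F(x_k)$, so the $k$-th terms of both sequences on the right are dominated by the integral of
$F^p u$ over that block; summing over the disjoint blocks bounds the right-hand side.
Conversely, $\int_0^\infty F^p u \le \sum_k 2^k F(x_k)^p$, and the splitting
$H(t) \le \int_t^{x_{j+1}} h + H(x_{j+1})$ on the blocks $(x_j, x_{j+1})$, $j \ge k$, gives
$F(x_k) \le 2^q \sum_{j \ge k} (A_j + E_j)$, where $A_j^{1/q}$ is the $j$-th term of the first sequence up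
to the factor $2^{j/r}$ and $E_j = H(x_{j+1})^q \int_{x_j}^{x_{j+1}} w$. A discrete Hardy inequality for the
geometric weights $2^k$ removes the tail sums, and $2^j E_j^p$ is at most twice the $r$-th power of the
$j$-th term of the second sequence, as seen by taking $s = x_{j+1}$ in its supremum.
\<close>

section \<open>Powers in $[0,\infty]$ and integrals over intervals\<close>

lemma epow_zero [simp]: "p > 0 \<Longrightarrow> epow 0 p = 0"
  by (simp add: epow_def)

lemma epow_one [simp]: "epow a 1 = a"
  by (cases a) (auto simp: epow_def)

lemma epow_ennreal: "c \<ge> 0 \<Longrightarrow> epow (ennreal c) p = ennreal (c powr p)"
  by (simp add: epow_def)

lemma epow_mono:
  assumes "p > 0" "a \<le> b"
  shows "epow a p \<le> epow b p"
proof (cases "b = \<infinity>")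
  case False
  then have "a \<noteq> \<infinity>"
    using assms(2) by (auto simp: top_unique)
  with False obtain s t where "a = ennreal s" "b = ennreal t" "s \<ge> 0" "t \<ge> 0"
    by (metis ennreal_cases infinity_ennreal_def)
  then show ?thesis
    using assms by (auto simp: epow_def intro!: ennreal_leI powr_mono2)
qed (simp add: epow_def)

lemma epow_mult:
  assumes "p > 0"
  shows "epow (a * b) p = epow a p * epow b p"
proof (cases "a = 0 \<or> b = 0")
  case False
  then show ?thesis
    using assms
    by (cases a rule: ennreal_cases; cases b rule: ennreal_cases)
      (auto simp: epow_def powr_mult ennreal_mult_eq_top_iff ennreal_top_mult ennreal_mult_top
        simp flip: ennreal_mult)
qed (use assms in auto)

lemma epow_cmult: "p > 0 \<Longrightarrow> c \<ge> 0 \<Longrightarrow> epow (ennreal c * a) p = ennreal (c powr p) * epow a p"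
  by (simp add: epow_mult epow_ennreal)

lemma epow_epow: "p > 0 \<Longrightarrow> s > 0 \<Longrightarrow> epow (epow a p) s = epow a (p * s)"
  by (cases a) (auto simp: epow_def powr_powr)

lemma epow_epow_inverse: "p > 0 \<Longrightarrow> epow (epow a p) (1 / p) = a"
  by (simp add: epow_epow)

lemma epow_inverse_epow: "p > 0 \<Longrightarrow> epow (epow a (1 / p)) p = a"
  by (simp add: epow_epow)

lemma epow_add_le:
  assumes "p > 0"
  shows "epow (a + b) p \<le> ennreal (2 powr p) * (epow a p + epow b p)"
proof -
  have "epow (a + b) p \<le> epow (2 * max a b) p"
    by (intro epow_mono assms) (metis add_mono max.cobounded1 max.cobounded2 mult_2)
  also have "\<dots> = ennreal (2 powr p) * epow (max a b) p"
    using epow_cmult[OF assms, of 2] by simp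
  also have "epow (max a b) p \<le> epow a p + epow b p"
    by (cases "a \<le> b") (auto simp: max_def)
  then have "ennreal (2 powr p) * epow (max a b) p \<le> ennreal (2 powr p) * (epow a p + epow b p)"
    by (rule mult_left_mono) simp
  finally show ?thesis .
qed

lemma epow_le_of_le_sum:
  assumes r: "r > 0" and K: "K \<ge> 0" and le: "I \<le> ennreal K * (S + T)"
  shows "epow I (1 / r) \<le> ennreal (K powr (1 / r) * 2 powr (1 / r)) * (epow S (1 / r) + epow T (1 / r))"
proof -
  have r': "1 / r > 0"
    using r by simp
  have "epow I (1 / r) \<le> ennreal (K powr (1 / r)) * epow (S + T) (1 / r)"
    using epow_mono[OF r' le] epow_cmult[OF r' K] by simp
  also have "\<dots> \<le> ennreal (K powr (1 / r)) * (ennreal (2 powr (1 / r)) * (epow S (1 / r) + epow T (1 / r)))"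
    by (intro mult_left_mono epow_add_le r') simp
  finally show ?thesis
    by (simp add: ennreal_mult mult.assoc)
qed

lemma epow_sum_le_of_le:
  assumes r: "r > 0" and "S \<le> 2 * I" and "T \<le> I"
  shows "epow S (1 / r) + epow T (1 / r) \<le> ennreal (2 powr (1 / r) + 1) * epow I (1 / r)"
proof -
  have r': "1 / r > 0"
    using r by simp
  have "epow S (1 / r) \<le> ennreal (2 powr (1 / r)) * epow I (1 / r)"
    using epow_mono[OF r' \<open>S \<le> 2 * I\<close>] epow_cmult[OF r', of 2 I] by simp
  moreover have "epow T (1 / r) \<le> epow I (1 / r)"
    using r' \<open>T \<le> I\<close> by (rule epow_mono)
  ultimately show ?thesis
    by (simp add: distrib_right add_mono)
qed

lemma is_interval_intv: "is_interval (intv a b)"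
  unfolding is_interval_1 intv_def
proof (intro ballI allI impI, simp, elim conjE)
  fix s t z :: real
  assume "a < ereal s" "ereal t < b" "s \<le> z" "z \<le> t"
  then show "a < ereal z \<and> ereal z < b"
    by (meson ereal_less_eq(3) less_le_trans le_less_trans)
qed

lemma intv_sets_borel [measurable]: "intv a b \<in> sets borel"
  by (rule real_interval_borel_measurable[OF is_interval_intv])

lemma intv_sets_lebesgue [measurable]: "intv a b \<in> sets lebesgue"
  by (metis intv_sets_borel sets_completionI_sets sets_lborel)

lemma antimono_borel_measurable_lebesgue:
  fixes g :: "real \<Rightarrow> 'a::{linorder_topology, second_countable_topology}"
  assumes "antimono g"
  shows "g \<in> borel_measurable lebesgue"
proof -
  have "g \<in> borel_measurable lborel"
  proof (rule borel_measurableI_greater)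
    fix y
    have "is_interval {t. y < g t}"
      using assms unfolding is_interval_1 by (auto dest: antimonoD intro: less_le_trans)
    then show "{t \<in> space lborel. y < g t} \<in> sets lborel"
      using real_interval_borel_measurable by simp
  qed
  then show ?thesis
    by (rule measurable_completion)
qed

lemma Int_ab_mono: "(\<And>t. t \<in> intv a b \<Longrightarrow> f t \<le> g t) \<Longrightarrow> Int_ab f a b \<le> Int_ab g a b"
  unfolding Int_ab_def by (intro nn_integral_mono) (auto split: split_indicator)

lemma Int_ab_mono_interval: "a' \<le> a \<Longrightarrow> b \<le> b' \<Longrightarrow> Int_ab f a b \<le> Int_ab f a' b'"
  unfolding Int_ab_def
  by (intro nn_integral_mono) (auto split: split_indicator simp: intv_def intro: le_less_trans less_le_trans)

lemma Int_ab_empty: "b \<le> a \<Longrightarrow> Int_ab f a b = 0"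
proof -
  assume "b \<le> a"
  then have "(\<lambda>t. f t * indicator (intv a b) t) = (\<lambda>_. 0)"
    by (auto simp: fun_eq_iff intv_def split: split_indicator dest: less_trans le_less_trans)
  then show ?thesis
    unfolding Int_ab_def by simp
qed

lemma Int_ab_cmult: "f \<in> borel_measurable lebesgue \<Longrightarrow> Int_ab (\<lambda>t. c * f t) a b = c * Int_ab f a b"
  unfolding Int_ab_def by (subst nn_integral_cmult[symmetric]) (auto simp: mult.assoc)

lemma Int_ab_multc: "f \<in> borel_measurable lebesgue \<Longrightarrow> Int_ab (\<lambda>t. f t * c) a b = Int_ab f a b * c"
  using Int_ab_cmult[of f c a b] by (simp add: mult.commute)

lemma Int_ab_add:
  "f \<in> borel_measurable lebesgue \<Longrightarrow> g \<in> borel_measurable lebesgue \<Longrightarrow>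
    Int_ab (\<lambda>t. f t + g t) a b = Int_ab f a b + Int_ab g a b"
  unfolding Int_ab_def by (subst nn_integral_add[symmetric]) (auto simp: distrib_right)

lemma Int_ab_split:
  assumes f: "f \<in> borel_measurable lebesgue" and "a \<le> ereal c" "ereal c \<le> b"
  shows "Int_ab f a b = Int_ab f a (ereal c) + Int_ab f (ereal c) b"
proof -
  have "AE t in lebesgue. t \<noteq> c"
    using AE_completion[OF AE_lborel_singleton[of c]] by simp
  then have "AE t in lebesgue. f t * indicator (intv a b) t =
      f t * indicator (intv a (ereal c)) t + f t * indicator (intv (ereal c) b) t"
  proof eventually_elim
    case (elim t)
    have "a < ereal t \<Longrightarrow> ereal t < ereal c \<Longrightarrow> ereal t < b"
      using assms(3) by (meson less_le_trans)
    moreover have "ereal c < ereal t \<Longrightarrow> a < ereal t"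
      using assms(2) by (meson le_less_trans)
    ultimately show ?case
      using elim by (auto split: split_indicator simp: intv_def)
  qed
  then have "Int_ab f a b =
      (\<integral>\<^sup>+t. f t * indicator (intv a (ereal c)) t + f t * indicator (intv (ereal c) b) t \<partial>lebesgue)"
    unfolding Int_ab_def by (rule nn_integral_cong_AE)
  also have "\<dots> = Int_ab f a (ereal c) + Int_ab f (ereal c) b"
    unfolding Int_ab_def using f by (intro nn_integral_add) auto
  finally show ?thesis .
qed

section \<open>Sums over integers and a discrete Hardy inequality\<close>

lemma sum_le_nn_integral_count_space:
  fixes f :: "'a \<Rightarrow> ennreal"
  assumes F: "finite F" "F \<subseteq> A"
  shows "sum f F \<le> (\<integral>\<^sup>+k. f k \<partial>count_space A)"
proof -
  have "sum f F = (\<integral>\<^sup>+k. f k * indicator F k \<partial>count_space A)"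
    using F by (subst nn_integral_count_space'[of F]) (auto intro!: sum.cong)
  also have "\<dots> \<le> (\<integral>\<^sup>+k. f k \<partial>count_space A)"
    by (intro nn_integral_mono) (auto split: split_indicator)
  finally show ?thesis .
qed

lemma nn_integral_count_space_ge_member:
  fixes f :: "'a \<Rightarrow> ennreal"
  shows "j \<in> A \<Longrightarrow> f j \<le> (\<integral>\<^sup>+k. f k \<partial>count_space A)"
  using sum_le_nn_integral_count_space[of "{j}" A f] by simp

lemma infsum_ennreal_eq_nn_integral_count_space:
  fixes f :: "'a::countable \<Rightarrow> ennreal"
  shows "infsum f A = (\<integral>\<^sup>+k. f k \<partial>count_space A)"
proof (rule antisym)
  have sup: "infsum f A = (SUP F\<in>{F. finite F \<and> F \<subseteq> A}. sum f F)"
    by (rule nonneg_infsum_complete) auto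
  then show "infsum f A \<le> (\<integral>\<^sup>+k. f k \<partial>count_space A)"
    by (auto intro!: SUP_least sum_le_nn_integral_count_space)
  show "(\<integral>\<^sup>+k. f k \<partial>count_space A) \<le> infsum f A"
  proof (cases "finite A")
    case True
    then show ?thesis
      unfolding sup by (subst nn_integral_count_space_finite[OF True]) (auto intro!: SUP_upper2[of A])
  next
    case False
    have bij: "bij_betw (from_nat_into A) UNIV A"
      using bij_betw_from_nat_into[OF _ False] by simp
    have "(\<integral>\<^sup>+k. f k \<partial>count_space A) = (\<Sum>n. f (from_nat_into A n))"
      by (simp add: nn_integral_bij_count_space[symmetric, OF bij] nn_integral_count_space_nat)
    also have "\<dots> = (SUP n. \<Sum>i<n. f (from_nat_into A i))"
      by (rule suminf_eq_SUP)
    also have "\<dots> \<le> infsum f A"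
    proof (rule SUP_least)
      fix n
      have inj: "inj_on (from_nat_into A) {..<n}"
        using bij by (auto simp: bij_betw_def inj_on_def)
      have "(\<Sum>i<n. f (from_nat_into A i)) = sum f (from_nat_into A ` {..<n})"
        by (simp add: sum.reindex[OF inj])
      also have "\<dots> \<le> infsum f A"
        unfolding sup using bij by (intro SUP_upper) (auto simp: bij_betw_def)
      finally show "(\<Sum>i<n. f (from_nat_into A i)) \<le> infsum f A" .
    qed
    finally show ?thesis .
  qed
qed

lemma nn_integral_count_space_mono_set:
  fixes f :: "'a \<Rightarrow> ennreal"
  shows "A \<subseteq> B \<Longrightarrow> (\<integral>\<^sup>+k. f k \<partial>count_space A) \<le> (\<integral>\<^sup>+k. f k \<partial>count_space B)"
  by (subst (1 2) nn_integral_count_space_indicator)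
    (auto intro!: nn_integral_mono split: split_indicator simp: NO_MATCH_def)

lemma nn_integral_count_space_Collect:
  fixes f :: "'a \<Rightarrow> ennreal"
  shows "(\<integral>\<^sup>+j. f j \<partial>count_space {j\<in>J. P j}) = (\<integral>\<^sup>+j. (if P j then f j else 0) \<partial>count_space J)"
proof -
  have "(\<integral>\<^sup>+j. f j \<partial>count_space {j\<in>J. P j}) = (\<integral>\<^sup>+j. (if P j then f j else 0) \<partial>count_space {j\<in>J. P j})"
    by (intro nn_integral_cong) auto
  also have "\<dots> = (\<integral>\<^sup>+j. (if P j then f j else 0) \<partial>count_space J)"
    by (rule nn_integral_count_space_eq) auto
  finally show ?thesis .
qed

lemma ennreal_two_powr_eq_double: "ennreal (2 powr real_of_int k) = 2 * ennreal (2 powr real_of_int (k - 1))"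
proof -
  have "(2::real) powr real_of_int k = 2 * 2 powr real_of_int (k - 1)"
    by (simp add: powr_mult_base)
  then show ?thesis
    by (simp add: ennreal_mult)
qed

definition geometric_sum_two :: "real \<Rightarrow> real" where
  "geometric_sum_two a = 1 / (1 - 2 powr (- a))"

lemma geometric_sum_two_nonneg: "a > 0 \<Longrightarrow> geometric_sum_two a \<ge> 0"
  using powr_less_mono[of "- a" 0 2] by (simp add: geometric_sum_two_def)

lemma suminf_two_powr_geometric:
  assumes "a > 0"
  shows "(\<Sum>n. ennreal ((2 powr (- a)) ^ n)) = ennreal (geometric_sum_two a)"
proof -
  have "2 powr (- a) < 1"
    using powr_less_mono[of "- a" 0 2] assms by simp
  then have "(\<lambda>n. ennreal ((2 powr (- a)) ^ n)) sums ennreal (geometric_sum_two a)"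
    unfolding geometric_sum_two_def by (subst sums_ennreal) (auto intro: geometric_sums)
  then show ?thesis
    by (simp add: sums_iff)
qed

lemma nn_integral_two_powr_upward:
  assumes "a > 0"
  shows "(\<integral>\<^sup>+j. ennreal (2 powr (- (a * real_of_int (j - k)))) \<partial>count_space {j. k \<le> j})
    = ennreal (geometric_sum_two a)"
proof -
  have bij: "bij_betw (\<lambda>n::nat. k + int n) UNIV {j. k \<le> j}"
    by (rule bij_betwI[where g = "\<lambda>j. nat (j - k)"]) auto
  show ?thesis
    using suminf_two_powr_geometric[OF assms]
    by (simp add: nn_integral_bij_count_space[OF bij, symmetric] nn_integral_count_space_nat
        powr_power mult.commute)
qed

lemma nn_integral_two_powr_downward:
  assumes "a > 0"
  shows "(\<integral>\<^sup>+k. ennreal (2 powr (- (a * real_of_int (j - k)))) \<partial>count_space {k. k \<le> j})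
    = ennreal (geometric_sum_two a)"
proof -
  have bij: "bij_betw (\<lambda>n::nat. j - int n) UNIV {k. k \<le> j}"
    by (rule bij_betwI[where g = "\<lambda>k. nat (j - k)"]) auto
  show ?thesis
    using suminf_two_powr_geometric[OF assms]
    by (simp add: nn_integral_bij_count_space[OF bij, symmetric] nn_integral_count_space_nat
        powr_power mult.commute)
qed

lemma two_powr_epow_rescale:
  assumes "p > 0"
  shows "ennreal (2 powr (- (c / p))) * epow (ennreal (2 powr c) * epow d p) (1 / p) = d"
proof -
  have "epow (ennreal (2 powr c) * epow d p) (1 / p) = ennreal (2 powr (c / p)) * d"
    using assms by (simp add: epow_cmult epow_epow_inverse powr_powr)
  moreover have "ennreal (2 powr (- (c / p))) * ennreal (2 powr (c / p)) = 1"
    by (simp flip: ennreal_mult powr_add)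
  ultimately show ?thesis
    by (simp add: mult.assoc[symmetric])
qed

text \<open>Since $p$ may be smaller than $1$, Holder's inequality is not available; instead each $d_j$ is
  written as $2^{-c/p} (2^c d_j^p)^{1/p}$ with $c = (j - k)/2$, and $2^c d_j^p$ is bounded by the whole
  sum over $j$.\<close>
lemma epow_tail_sum_le:
  fixes d :: "int \<Rightarrow> ennreal"
  assumes p: "p > 0"
  shows "epow (\<integral>\<^sup>+j. d j \<partial>count_space {j\<in>J. k \<le> j}) p
    \<le> ennreal (geometric_sum_two (1 / (2 * p)) powr p) *
      (\<integral>\<^sup>+j. ennreal (2 powr (real_of_int (j - k) / 2)) * epow (d j) p \<partial>count_space {j\<in>J. k \<le> j})"
proof -
  define T where
    "T = (\<integral>\<^sup>+j. ennreal (2 powr (real_of_int (j - k) / 2)) * epow (d j) p \<partial>count_space {j\<in>J. k \<le> j})"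
  define \<delta> where "\<delta> j = 2 powr (- (real_of_int (j - k) / 2 / p))" for j
  define K where "K = geometric_sum_two (1 / (2 * p))"
  have "(\<integral>\<^sup>+j. d j \<partial>count_space {j\<in>J. k \<le> j})
      \<le> (\<integral>\<^sup>+j. ennreal (\<delta> j) * epow T (1 / p) \<partial>count_space {j\<in>J. k \<le> j})"
  proof (intro nn_integral_mono)
    fix j
    assume "j \<in> space (count_space {j\<in>J. k \<le> j})"
    then have "ennreal (2 powr (real_of_int (j - k) / 2)) * epow (d j) p \<le> T"
      unfolding T_def by (intro nn_integral_count_space_ge_member) simp
    then have "ennreal (\<delta> j) * epow (ennreal (2 powr (real_of_int (j - k) / 2)) * epow (d j) p) (1 / p)
        \<le> ennreal (\<delta> j) * epow T (1 / p)"
      by (intro mult_left_mono epow_mono) (use p in auto)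
    then show "d j \<le> ennreal (\<delta> j) * epow T (1 / p)"
      unfolding \<delta>_def two_powr_epow_rescale[OF p] .
  qed
  also have "\<dots> = (\<integral>\<^sup>+j. ennreal (\<delta> j) \<partial>count_space {j\<in>J. k \<le> j}) * epow T (1 / p)"
    by (rule nn_integral_multc) simp
  also have "\<dots> \<le> ennreal K * epow T (1 / p)"
  proof (rule mult_right_mono)
    have "(\<integral>\<^sup>+j. ennreal (\<delta> j) \<partial>count_space {j\<in>J. k \<le> j}) \<le> (\<integral>\<^sup>+j. ennreal (\<delta> j) \<partial>count_space {j. k \<le> j})"
      by (rule nn_integral_count_space_mono_set) auto
    then show "(\<integral>\<^sup>+j. ennreal (\<delta> j) \<partial>count_space {j\<in>J. k \<le> j}) \<le> ennreal K"
      unfolding \<delta>_def K_def using nn_integral_two_powr_upward[of "1 / (2 * p)" k] p by simp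
  qed simp
  finally have "epow (\<integral>\<^sup>+j. d j \<partial>count_space {j\<in>J. k \<le> j}) p \<le> epow (ennreal K * epow T (1 / p)) p"
    by (rule epow_mono[OF p])
  also have "\<dots> = ennreal (K powr p) * T"
    using p geometric_sum_two_nonneg[of "1 / (2 * p)"] by (simp add: K_def epow_cmult epow_inverse_epow)
  finally show ?thesis
    unfolding K_def T_def .
qed

lemma two_powr_mult_tail_sum_eq:
  fixes e :: "int \<Rightarrow> ennreal"
  shows "ennreal (2 powr real_of_int k) *
      (\<integral>\<^sup>+j. ennreal (2 powr (real_of_int (j - k) / 2)) * e j \<partial>count_space {j\<in>J. k \<le> j})
    = (\<integral>\<^sup>+j. (if k \<le> j then ennreal (2 powr (- (1 / 2 * real_of_int (j - k)))) else 0) *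
        (ennreal (2 powr real_of_int j) * e j) \<partial>count_space J)"
proof -
  have weight_eq: "ennreal (2 powr real_of_int k) * (ennreal (2 powr (real_of_int (j - k) / 2)) * e j)
      = ennreal (2 powr (- (1 / 2 * real_of_int (j - k)))) * (ennreal (2 powr real_of_int j) * e j)" for j
  proof -
    have "2 powr real_of_int k * 2 powr (real_of_int (j - k) / 2)
        = 2 powr (- (1 / 2 * real_of_int (j - k))) * (2 powr real_of_int j :: real)"
      by (simp add: powr_add[symmetric] field_simps)
    then show ?thesis
      by (simp add: mult.assoc[symmetric] flip: ennreal_mult)
  qed
  have "ennreal (2 powr real_of_int k) *
      (\<integral>\<^sup>+j. ennreal (2 powr (real_of_int (j - k) / 2)) * e j \<partial>count_space {j\<in>J. k \<le> j})
    = (\<integral>\<^sup>+j. ennreal (2 powr real_of_int k) *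
        (if k \<le> j then ennreal (2 powr (real_of_int (j - k) / 2)) * e j else 0) \<partial>count_space J)"
    unfolding nn_integral_count_space_Collect by (rule nn_integral_cmult[symmetric]) simp
  also have "\<dots> = (\<integral>\<^sup>+j. (if k \<le> j then ennreal (2 powr (- (1 / 2 * real_of_int (j - k)))) else 0) *
        (ennreal (2 powr real_of_int j) * e j) \<partial>count_space J)"
    by (intro nn_integral_cong) (use weight_eq in auto)
  finally show ?thesis .
qed

lemma sum_weighted_tail_sums_le:
  fixes e :: "int \<Rightarrow> ennreal"
  shows "(\<integral>\<^sup>+k. ennreal (2 powr real_of_int k) *
      (\<integral>\<^sup>+j. ennreal (2 powr (real_of_int (j - k) / 2)) * e j \<partial>count_space {j\<in>J. k \<le> j}) \<partial>count_space J)
    \<le> ennreal (geometric_sum_two (1 / 2)) * (\<integral>\<^sup>+j. ennreal (2 powr real_of_int j) * e j \<partial>count_space J)"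
proof -
  define g where "g j k = (if k \<le> j then ennreal (2 powr (- (1 / 2 * real_of_int (j - k)))) else 0)" for j k
  have "(\<integral>\<^sup>+k. ennreal (2 powr real_of_int k) *
      (\<integral>\<^sup>+j. ennreal (2 powr (real_of_int (j - k) / 2)) * e j \<partial>count_space {j\<in>J. k \<le> j}) \<partial>count_space J)
    = (\<integral>\<^sup>+k. \<integral>\<^sup>+j. g j k * (ennreal (2 powr real_of_int j) * e j) \<partial>count_space J \<partial>count_space J)"
    unfolding g_def two_powr_mult_tail_sum_eq ..
  also have "\<dots> = (\<integral>\<^sup>+j. (\<integral>\<^sup>+k. g j k \<partial>count_space J) * (ennreal (2 powr real_of_int j) * e j) \<partial>count_space J)"
    by (subst nn_integral_count_space_nn_integral) (auto intro!: nn_integral_cong nn_integral_multc)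
  also have "\<dots> \<le> (\<integral>\<^sup>+j. ennreal (geometric_sum_two (1 / 2)) * (ennreal (2 powr real_of_int j) * e j) \<partial>count_space J)"
  proof (intro nn_integral_mono mult_right_mono)
    fix j
    have "(\<integral>\<^sup>+k. g j k \<partial>count_space J)
        \<le> (\<integral>\<^sup>+k. ennreal (2 powr (- (1 / 2 * real_of_int (j - k)))) \<partial>count_space {k. k \<le> j})"
      unfolding g_def nn_integral_count_space_Collect[symmetric]
      by (rule nn_integral_count_space_mono_set) auto
    then show "(\<integral>\<^sup>+k. g j k \<partial>count_space J) \<le> ennreal (geometric_sum_two (1 / 2))"
      using nn_integral_two_powr_downward[of "1 / 2" j] by simp
  qed simp
  also have "\<dots> = ennreal (geometric_sum_two (1 / 2)) * (\<integral>\<^sup>+j. ennreal (2 powr real_of_int j) * e j \<partial>count_space J)"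
    by (rule nn_integral_cmult) simp
  finally show ?thesis .
qed

definition hardy_const :: "real \<Rightarrow> real" where
  "hardy_const p = geometric_sum_two (1 / (2 * p)) powr p * geometric_sum_two (1 / 2)"

lemma hardy_const_nonneg: "hardy_const p \<ge> 0"
  using geometric_sum_two_nonneg[of "1 / 2"] by (simp add: hardy_const_def)

lemma discrete_hardy_inequality:
  fixes d :: "int \<Rightarrow> ennreal"
  assumes p: "p > 0"
  shows "(\<integral>\<^sup>+k. ennreal (2 powr real_of_int k) * epow (\<integral>\<^sup>+j. d j \<partial>count_space {j\<in>J. k \<le> j}) p \<partial>count_space J)
    \<le> ennreal (hardy_const p) * (\<integral>\<^sup>+j. ennreal (2 powr real_of_int j) * epow (d j) p \<partial>count_space J)"
proof -
  define K where "K = geometric_sum_two (1 / (2 * p)) powr p"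
  define T where
    "T k = (\<integral>\<^sup>+j. ennreal (2 powr (real_of_int (j - k) / 2)) * epow (d j) p \<partial>count_space {j\<in>J. k \<le> j})" for k
  have "(\<integral>\<^sup>+k. ennreal (2 powr real_of_int k) * epow (\<integral>\<^sup>+j. d j \<partial>count_space {j\<in>J. k \<le> j}) p \<partial>count_space J)
      \<le> (\<integral>\<^sup>+k. ennreal K * (ennreal (2 powr real_of_int k) * T k) \<partial>count_space J)"
    using epow_tail_sum_le[OF p]
    by (intro nn_integral_mono) (metis (no_types, lifting) K_def T_def mult.left_commute mult_left_mono zero_le)
  also have "\<dots> = ennreal K * (\<integral>\<^sup>+k. ennreal (2 powr real_of_int k) * T k \<partial>count_space J)"
    by (rule nn_integral_cmult) simp
  also have "\<dots> \<le> ennreal K * (ennreal (geometric_sum_two (1 / 2)) *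
      (\<integral>\<^sup>+j. ennreal (2 powr real_of_int j) * epow (d j) p \<partial>count_space J))"
    unfolding T_def by (intro mult_left_mono sum_weighted_tail_sums_le) simp
  finally show ?thesis
    using geometric_sum_two_nonneg[of "1 / 2"]
    by (simp add: K_def hardy_const_def ennreal_mult mult.assoc)
qed

section \<open>Covering sequences\<close>

locale covering_sequence =
  fixes u :: "real \<Rightarrow> ennreal" and x :: "int \<Rightarrow> ereal" and Z :: "int set"
  assumes weight_u: "weight u" and covering: "covering_seq u x Z"
begin

lemma u_measurable: "u \<in> borel_measurable lebesgue"
  using weight_u by (simp add: weight_def)

lemma Int_u_initial:
  assumes "y > 0"
  obtains i where "i > 0" "Int_ab u 0 (ereal y) = ennreal i"
proof
  have "0 < Int_ab u 0 (ereal y)" "Int_ab u 0 (ereal y) < \<infinity>"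
    using weight_u assms by (simp_all add: weight_def)
  then show "enn2real (Int_ab u 0 (ereal y)) > 0" "Int_ab u 0 (ereal y) = ennreal (enn2real (Int_ab u 0 (ereal y)))"
    by (auto simp: enn2real_positive_iff less_top)
qed

lemma Z_nonempty: "Z \<noteq> {}"
  using covering unfolding covering_seq_def by (auto split: if_splits)

lemma Z_pred: "k \<in> Z \<Longrightarrow> k - 1 \<in> Z"
  using covering unfolding covering_seq_def by (auto split: if_splits)

lemma Int_u_x: "k \<in> Z \<Longrightarrow> Int_ab u 0 (x k) = ennreal (2 powr real_of_int k)"
  using covering unfolding covering_seq_def by (auto split: if_splits)

lemma x_pos_real:
  assumes "k \<in> Z"
  obtains c where "c > 0" "x k = ereal c"
proof -
  have "0 < x k" "x k < \<infinity>"
    using covering assms unfolding covering_seq_def by (auto split: if_splits)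
  with that show ?thesis
    by (cases "x k") auto
qed

lemma x_after_last:
  assumes "k \<in> Z" "k + 1 \<notin> Z"
  shows "x (k + 1) = \<infinity>" and "Int_ab u 0 \<infinity> < ennreal (2 powr real_of_int (k + 1))"
proof -
  obtain M where M: "Z = {..M}" "x (M + 1) = \<infinity>" "Int_ab u 0 \<infinity> < ennreal (2 powr real_of_int (M + 1))"
    using covering assms(2) unfolding covering_seq_def by (auto split: if_splits)
  with assms have "k = M"
    by auto
  with M show "x (k + 1) = \<infinity>" and "Int_ab u 0 \<infinity> < ennreal (2 powr real_of_int (k + 1))"
    by simp_all
qed

lemma Z_downward_closed:
  assumes "k \<in> Z" "j \<le> k"
  shows "j \<in> Z"
  using assms(2) by (induction j rule: int_le_induct) (auto intro: Z_pred assms(1))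

lemma x_less_succ:
  assumes "k \<in> Z"
  shows "x k < x (k + 1)"
proof (cases "k + 1 \<in> Z")
  case True
  have "ennreal (2 powr real_of_int k) < ennreal (2 powr real_of_int (k + 1))"
    by (simp add: ennreal_less_iff)
  then have "\<not> Int_ab u 0 (x (k + 1)) \<le> Int_ab u 0 (x k)"
    using Int_u_x assms True by simp
  then show ?thesis
    using Int_ab_mono_interval[of 0 0 "x (k + 1)" "x k" u] by (meson order_refl not_le)
next
  case False
  obtain c where "x k = ereal c"
    using x_pos_real[OF assms] by blast
  with False show ?thesis
    using x_after_last[OF assms] by simp
qed

lemma x_mono:
  assumes "k \<in> Z" "j \<le> k"
  shows "x j \<le> x k"
  using assms(2)
proof (induction j rule: int_le_induct)
  case (step i)
  then have "x (i - 1) < x i"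
    using x_less_succ[of "i - 1"] Z_downward_closed[OF assms(1), of "i - 1"] by simp
  with step show ?case
    by simp
qed simp

lemma Int_u_block_before:
  assumes "k \<in> Z"
  shows "Int_ab u (x (k - 1)) (x k) = ennreal (2 powr real_of_int (k - 1))"
proof -
  have k': "k - 1 \<in> Z"
    using Z_pred assms by simp
  obtain c where "x (k - 1) = ereal c"
    using x_pos_real[OF k'] by blast
  moreover have "x (k - 1) < x k"
    using x_less_succ[OF k'] by simp
  ultimately have "Int_ab u 0 (x k) = Int_ab u 0 (x (k - 1)) + Int_ab u (x (k - 1)) (x k)"
    using Int_ab_split[OF u_measurable, of 0 c "x k"] x_pos_real[OF k'] by fastforce
  moreover have "ennreal (2 powr real_of_int k)
      = ennreal (2 powr real_of_int (k - 1)) + ennreal (2 powr real_of_int (k - 1))"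
    by (simp add: powr_mult_base flip: ennreal_plus)
  ultimately show ?thesis
    using Int_u_x assms k' by simp
qed

lemma Int_u_block_after:
  assumes "k \<in> Z"
  shows "Int_ab u (x k) (x (k + 1)) \<le> ennreal (2 powr real_of_int k)"
proof (cases "k + 1 \<in> Z")
  case True
  then show ?thesis
    using Int_u_block_before[OF True] by simp
next
  case False
  obtain c where "c > 0" "x k = ereal c"
    using x_pos_real[OF assms] by blast
  then have "Int_ab u 0 \<infinity> = Int_ab u 0 (x k) + Int_ab u (x k) (x (k + 1))"
    using Int_ab_split[OF u_measurable, of 0 c \<infinity>] x_after_last[OF assms False] by simp
  then have "ennreal (2 powr real_of_int k) + Int_ab u (x k) (x (k + 1))
      < ennreal (2 powr real_of_int k) + ennreal (2 powr real_of_int k)"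
    using x_after_last[OF assms False] Int_u_x[OF assms]
    by (simp add: powr_add mult.commute flip: ennreal_plus)
  then show ?thesis
    unfolding ennreal_add_left_cancel_less by simp
qed

lemma exists_x_below:
  assumes "y > 0"
  shows "\<exists>k\<in>Z. x k < ereal y"
proof -
  obtain i where i: "i > 0" "Int_ab u 0 (ereal y) = ennreal i"
    using Int_u_initial[OF assms] by blast
  obtain k1 where "k1 \<in> Z"
    using Z_nonempty by blast
  define k where "k = min k1 (\<lfloor>log 2 i\<rfloor> - 1)"
  have "k \<in> Z"
    using Z_downward_closed[OF \<open>k1 \<in> Z\<close>] by (simp add: k_def)
  have "2 powr real_of_int k \<le> 2 powr (log 2 i - 1)"
    unfolding k_def by (intro powr_mono) linarith+
  also have "\<dots> < i"
    using i powr_less_mono[of "log 2 i - 1" "log 2 i" 2] by simp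
  finally have "2 powr real_of_int k < i" .
  have "x k < ereal y"
  proof (rule ccontr)
    assume "\<not> x k < ereal y"
    then have "Int_ab u 0 (ereal y) \<le> Int_ab u 0 (x k)"
      by (intro Int_ab_mono_interval) auto
    with \<open>2 powr real_of_int k < i\<close> show False
      using i Int_u_x[OF \<open>k \<in> Z\<close>] by (simp add: ennreal_le_iff)
  qed
  with \<open>k \<in> Z\<close> show ?thesis
    by blast
qed

lemma x_below_bounded:
  assumes "y > 0"
  shows "\<exists>N. \<forall>k\<in>Z. x k < ereal y \<longrightarrow> k \<le> N"
proof -
  obtain i where i: "i > 0" "Int_ab u 0 (ereal y) = ennreal i"
    using Int_u_initial[OF assms] by blast
  have "k \<le> \<lfloor>log 2 i\<rfloor>" if "k \<in> Z" "x k < ereal y" for k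
  proof -
    have "Int_ab u 0 (x k) \<le> Int_ab u 0 (ereal y)"
      using that by (intro Int_ab_mono_interval) auto
    then have "2 powr real_of_int k \<le> i"
      using i Int_u_x[OF that(1)] by (simp add: ennreal_le_iff)
    then show ?thesis
      using i by (simp add: le_floor_iff le_log_iff)
  qed
  then show ?thesis
    by blast
qed

text \<open>The block containing \<open>y\<close> is the one starting at the last node below \<open>y\<close>.\<close>
lemma exists_block:
  assumes y: "y > 0" and not_node: "\<forall>k\<in>Z. x k \<noteq> ereal y"
  shows "\<exists>k\<in>Z. x k < ereal y \<and> ereal y < x (k + 1)"
proof -
  obtain k0 where k0: "k0 \<in> Z" "x k0 < ereal y"
    using exists_x_below[OF y] by blast
  obtain N where N: "\<And>k. k \<in> Z \<Longrightarrow> x k < ereal y \<Longrightarrow> k \<le> N"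
    using x_below_bounded[OF y] by blast
  define K where "K = {k \<in> Z. x k < ereal y \<and> k0 \<le> k}"
  have "finite K"
    using N by (intro finite_subset[of K "{k0..N}"]) (auto simp: K_def)
  have "k0 \<in> K"
    using k0 by (simp add: K_def)
  define m where "m = Max K"
  have m: "m \<in> Z" "x m < ereal y"
    using Max_in[OF \<open>finite K\<close>] \<open>k0 \<in> K\<close> by (auto simp: m_def K_def)
  have "ereal y < x (m + 1)"
  proof (cases "m + 1 \<in> Z")
    case True
    have "\<not> x (m + 1) < ereal y"
    proof
      assume "x (m + 1) < ereal y"
      then have "m + 1 \<in> K"
        using True Max_ge[OF \<open>finite K\<close> \<open>k0 \<in> K\<close>] by (simp add: K_def m_def)
      then have "m + 1 \<le> m"
        unfolding m_def by (rule Max_ge[OF \<open>finite K\<close>])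
      then show False
        by simp
    qed
    moreover have "x (m + 1) \<noteq> ereal y"
      using not_node True by blast
    ultimately show ?thesis
      by (simp add: not_less order.order_iff_strict)
  next
    case False
    then show ?thesis
      using x_after_last m by simp
  qed
  with m show ?thesis
    by blast
qed

lemma exists_block_after:
  assumes "y > 0" "\<forall>k\<in>Z. x k \<noteq> ereal y" "k \<in> Z" "x k < ereal y"
  shows "\<exists>j\<in>Z. k \<le> j \<and> x j < ereal y \<and> ereal y < x (j + 1)"
proof -
  obtain j where j: "j \<in> Z" "x j < ereal y" "ereal y < x (j + 1)"
    using exists_block assms(1,2) by blast
  have "k \<le> j"
  proof (rule ccontr)
    assume "\<not> k \<le> j"
    then have "x (j + 1) \<le> x k"
      using x_mono[OF assms(3), of "j + 1"] by simp
    with j assms(4) show False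
      by simp
  qed
  with j show ?thesis
    by blast
qed

lemma AE_not_node: "AE y in lebesgue. \<forall>k\<in>Z. x k \<noteq> ereal y"
proof -
  have "real_of_ereal ` x ` Z \<in> null_sets lborel"
    by (intro countable_imp_null_set_lborel) simp
  then have "AE y in lebesgue. y \<notin> real_of_ereal ` x ` Z"
    by (intro AE_completion AE_not_in)
  then show ?thesis
    by eventually_elim (metis image_eqI real_of_ereal.simps(1))
qed

lemma Int_ab_le_sum_blocks:
  assumes g: "g \<in> borel_measurable lebesgue"
    and covered: "\<And>y. a < ereal y \<Longrightarrow> \<forall>k\<in>Z. x k \<noteq> ereal y \<Longrightarrow> \<exists>j\<in>J. x j < ereal y \<and> ereal y < x (j + 1)"
  shows "Int_ab g a \<infinity> \<le> (\<integral>\<^sup>+j. Int_ab g (x j) (x (j + 1)) \<partial>count_space J)"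
proof -
  have "Int_ab g a \<infinity> \<le> (\<integral>\<^sup>+y. \<integral>\<^sup>+j. g y * indicator (intv (x j) (x (j + 1))) y \<partial>count_space J \<partial>lebesgue)"
    unfolding Int_ab_def
  proof (rule nn_integral_mono_AE)
    show "AE y in lebesgue. g y * indicator (intv a \<infinity>) y
        \<le> (\<integral>\<^sup>+j. g y * indicator (intv (x j) (x (j + 1))) y \<partial>count_space J)"
      using AE_not_node
    proof eventually_elim
      case (elim y)
      show ?case
      proof (cases "a < ereal y")
        case True
        then obtain j where "j \<in> J" "x j < ereal y" "ereal y < x (j + 1)"
          using covered elim by blast
        with True show ?thesis
          using nn_integral_count_space_ge_member[OF \<open>j \<in> J\<close>,
              of "\<lambda>j. g y * indicator (intv (x j) (x (j + 1))) y"]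
          by (simp add: intv_def)
      qed (simp add: intv_def)
    qed
  qed
  also have "\<dots> = (\<integral>\<^sup>+j. Int_ab g (x j) (x (j + 1)) \<partial>count_space J)"
    unfolding Int_ab_def using g by (intro nn_integral_count_space_nn_integral) auto
  finally show ?thesis .
qed

lemma blocks_disjoint:
  assumes "j \<in> Z" "k \<in> Z" "y \<in> intv (x (j - 1)) (x j)" "y \<in> intv (x (k - 1)) (x k)"
  shows "j = k"
proof (rule ccontr)
  assume "j \<noteq> k"
  then consider "j \<le> k - 1" | "k \<le> j - 1"
    by linarith
  then show False
  proof cases
    case 1
    then have "x j \<le> x (k - 1)"
      using x_mono Z_pred assms(2) by blast
    with assms(3,4) show False
      by (auto simp: intv_def)
  next
    case 2
    then have "x k \<le> x (j - 1)"
      using x_mono Z_pred assms(1) by blast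
    with assms(3,4) show False
      by (auto simp: intv_def)
  qed
qed

lemma sum_block_indicators_le:
  "(\<integral>\<^sup>+k. c * indicator (intv (x (k - 1)) (x k)) y \<partial>count_space Z) \<le> c * indicator (intv 0 \<infinity>) y"
proof (cases "\<exists>k\<in>Z. y \<in> intv (x (k - 1)) (x k)")
  case True
  then obtain k where k: "k \<in> Z" "y \<in> intv (x (k - 1)) (x k)"
    by blast
  obtain c' where "c' > 0" "x (k - 1) = ereal c'"
    using x_pos_real Z_pred[OF k(1)] by blast
  with k have "y \<in> intv 0 \<infinity>"
    by (auto simp: intv_def)
  have "(\<integral>\<^sup>+j. c * indicator (intv (x (j - 1)) (x j)) y \<partial>count_space Z)
      = (\<Sum>j\<in>{k}. c * indicator (intv (x (j - 1)) (x j)) y)"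
    using k blocks_disjoint by (intro nn_integral_count_space') (auto split: split_indicator)
  with k \<open>y \<in> intv 0 \<infinity>\<close> show ?thesis
    by simp
next
  case False
  then have "(\<integral>\<^sup>+k. c * indicator (intv (x (k - 1)) (x k)) y \<partial>count_space Z) = 0"
    by (subst nn_integral_0_iff_AE) (auto simp: AE_count_space)
  then show ?thesis
    by simp
qed

lemma sum_blocks_le_Int_ab:
  assumes g: "g \<in> borel_measurable lebesgue"
  shows "(\<integral>\<^sup>+k. Int_ab g (x (k - 1)) (x k) \<partial>count_space Z) \<le> Int_ab g 0 \<infinity>"
proof -
  have "(\<integral>\<^sup>+k. Int_ab g (x (k - 1)) (x k) \<partial>count_space Z)
      = (\<integral>\<^sup>+y. \<integral>\<^sup>+k. g y * indicator (intv (x (k - 1)) (x k)) y \<partial>count_space Z \<partial>lebesgue)"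
    unfolding Int_ab_def using g by (intro nn_integral_count_space_nn_integral[symmetric]) auto
  also have "\<dots> \<le> (\<integral>\<^sup>+y. g y * indicator (intv 0 \<infinity>) y \<partial>lebesgue)"
    by (intro nn_integral_mono sum_block_indicators_le)
  finally show ?thesis
    unfolding Int_ab_def .
qed

end

definition upper_const :: "real \<Rightarrow> real \<Rightarrow> real" where
  "upper_const q r = hardy_const (r / q) * (2 powr r * 2 powr (r / q)) * 2"

definition norm_equiv_const :: "real \<Rightarrow> real \<Rightarrow> real" where
  "norm_equiv_const q r = max (upper_const q r powr (1 / r) * 2 powr (1 / r)) (2 powr (1 / r) + 1)"

lemma upper_const_nonneg: "upper_const q r \<ge> 0"
  using hardy_const_nonneg by (simp add: upper_const_def)

lemma norm_equiv_const_pos: "norm_equiv_const q r > 0"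
  by (simp add: norm_equiv_const_def less_max_iff_disj add_pos_nonneg)

locale iterated_hardy_setting = covering_sequence u x Z
  for u :: "real \<Rightarrow> ennreal" and x :: "int \<Rightarrow> ereal" and Z :: "int set" +
  fixes q r :: real and w h :: "real \<Rightarrow> ennreal"
  assumes q_pos: "0 < q" and r_pos: "0 < r" and weight_w: "weight w"
    and h_measurable: "h \<in> borel_measurable lebesgue"
begin

definition "p = r / q"
definition "H b = Int_ab h b \<infinity>"
definition "G t = epow (H (ereal t)) q * w t"
definition "F b = Int_ab G b \<infinity>"
definition "Phi y = epow (F (ereal y)) p * u y"
definition "A k = Int_ab (\<lambda>s. epow (Int_ab h (ereal s) (x (k + 1))) q * w s) (x k) (x (k + 1))"
definition "S k t = (SUP s\<in>{s. ereal t < ereal s \<and> ereal s \<le> x (k + 1)}.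
                       epow (Int_ab w (x k) (ereal s)) p * epow (H (ereal s)) r)"
definition "B k = Int_ab (\<lambda>t. u t * S k t) (x (k - 1)) (x k)"
definition "a_seq k = ennreal (2 powr (real_of_int k / r)) * epow (A k) (1 / q)"
definition "b_seq k = epow (B k) (1 / r)"
definition "E k = epow (H (x (k + 1))) q * Int_ab w (x k) (x (k + 1))"

definition "I = Int_ab Phi 0 \<infinity>"
definition "SA = (\<integral>\<^sup>+k. ennreal (2 powr real_of_int k) * epow (A k) p \<partial>count_space Z)"
definition "SB = (\<integral>\<^sup>+k. B k \<partial>count_space Z)"

text \<open>The left-hand side is $I^{1/r}$, the two sequences on the right are \<open>a_seq\<close> and \<open>b_seq\<close>, and
  \<open>SA\<close>, \<open>SB\<close> are the $r$-th powers of their $\ell^r$ norms.\<close>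

lemma p_pos: "p > 0"
  using q_pos r_pos by (simp add: p_def)

lemma q_mult_p: "q * p = r"
  using q_pos by (simp add: p_def)

lemma w_measurable: "w \<in> borel_measurable lebesgue"
  using weight_w by (simp add: weight_def)

lemma H_antimono: "b \<le> b' \<Longrightarrow> H b' \<le> H b"
  unfolding H_def by (intro Int_ab_mono_interval) auto

lemma F_antimono: "b \<le> b' \<Longrightarrow> F b' \<le> F b"
  unfolding F_def by (intro Int_ab_mono_interval) auto

lemma truncated_measurable: "(\<lambda>t. epow (Int_ab h (ereal t) c) q * w t) \<in> borel_measurable lebesgue"
proof -
  have "antimono (\<lambda>t. epow (Int_ab h (ereal t) c) q)"
    using q_pos by (intro antimonoI epow_mono Int_ab_mono_interval) auto
  then have "(\<lambda>t. epow (Int_ab h (ereal t) c) q) \<in> borel_measurable lebesgue"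
    by (rule antimono_borel_measurable_lebesgue)
  with w_measurable show ?thesis
    by measurable
qed

lemma G_measurable: "G \<in> borel_measurable lebesgue"
  using truncated_measurable[of \<infinity>] by (simp add: G_def[abs_def] H_def)

lemma Phi_measurable: "Phi \<in> borel_measurable lebesgue"
proof -
  have "antimono (\<lambda>y. epow (F (ereal y)) p)"
    using p_pos by (intro antimonoI epow_mono F_antimono) auto
  then have "(\<lambda>y. epow (F (ereal y)) p) \<in> borel_measurable lebesgue"
    by (rule antimono_borel_measurable_lebesgue)
  with u_measurable show ?thesis
    unfolding Phi_def[abs_def] by measurable
qed

lemma epow_a_seq: "epow (a_seq k) r = ennreal (2 powr real_of_int k) * epow (A k) p"
  using q_pos r_pos
  by (simp add: a_seq_def epow_cmult epow_epow powr_powr p_def)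

lemma lr_norm_a_seq: "lr_norm r Z a_seq = epow SA (1 / r)"
  unfolding lr_norm_def SA_def infsum_ennreal_eq_nn_integral_count_space epow_a_seq ..

lemma lr_norm_b_seq: "lr_norm r Z b_seq = epow SB (1 / r)"
  unfolding lr_norm_def SB_def infsum_ennreal_eq_nn_integral_count_space b_seq_def
  using epow_inverse_epow[OF r_pos] by simp

subsection \<open>The right-hand side is dominated by the left-hand side\<close>

lemma A_le_F: "A k \<le> F (x k)"
  unfolding A_def F_def G_def H_def using q_pos
  by (intro order_trans[OF Int_ab_mono Int_ab_mono_interval] mult_right_mono epow_mono Int_ab_mono_interval)
    auto

lemma u_F_le_Phi: "ereal t < c \<Longrightarrow> u t * epow (F c) p \<le> Phi t"
  unfolding Phi_def using p_pos
  by (subst mult.commute) (intro mult_right_mono epow_mono F_antimono, auto)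

lemma two_powr_F_le_Int_Phi:
  assumes "k \<in> Z"
  shows "ennreal (2 powr real_of_int k) * epow (F (x k)) p \<le> 2 * Int_ab Phi (x (k - 1)) (x k)"
proof -
  have "ennreal (2 powr real_of_int k) * epow (F (x k)) p = 2 * (Int_ab u (x (k - 1)) (x k) * epow (F (x k)) p)"
    using Int_u_block_before[OF assms] by (simp add: ennreal_two_powr_eq_double mult.assoc)
  also have "Int_ab u (x (k - 1)) (x k) * epow (F (x k)) p = Int_ab (\<lambda>t. u t * epow (F (x k)) p) (x (k - 1)) (x k)"
    by (rule Int_ab_multc[symmetric, OF u_measurable])
  also have "\<dots> \<le> Int_ab Phi (x (k - 1)) (x k)"
    by (intro Int_ab_mono u_F_le_Phi) (auto simp: intv_def)
  finally show ?thesis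
    by (simp add: mult_left_mono)
qed

lemma S_le_F: "S k t \<le> epow (F (x k)) p"
  unfolding S_def
proof (rule SUP_least)
  fix s
  assume "s \<in> {s. ereal t < ereal s \<and> ereal s \<le> x (k + 1)}"
  show "epow (Int_ab w (x k) (ereal s)) p * epow (H (ereal s)) r \<le> epow (F (x k)) p"
  proof (cases "ereal s \<le> x k")
    case True
    then show ?thesis
      using Int_ab_empty[OF True] p_pos by simp
  next
    case False
    have "epow (Int_ab w (x k) (ereal s)) p * epow (H (ereal s)) r
        = epow (Int_ab w (x k) (ereal s) * epow (H (ereal s)) q) p"
      using q_pos p_pos by (simp add: epow_mult epow_epow q_mult_p)
    also have "Int_ab w (x k) (ereal s) * epow (H (ereal s)) q
        = Int_ab (\<lambda>t. w t * epow (H (ereal s)) q) (x k) (ereal s)"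
      by (rule Int_ab_multc[symmetric, OF w_measurable])
    also have "\<dots> \<le> Int_ab G (x k) (ereal s)"
      unfolding G_def using q_pos
      by (intro Int_ab_mono) (auto simp: intv_def mult.commute intro!: mult_left_mono epow_mono H_antimono)
    also have "\<dots> \<le> F (x k)"
      unfolding F_def by (intro Int_ab_mono_interval) auto
    finally show ?thesis
      using p_pos by (auto intro: epow_mono)
  qed
qed

lemma B_le_Int_Phi: "B k \<le> Int_ab Phi (x (k - 1)) (x k)"
  unfolding B_def
proof (intro Int_ab_mono)
  fix t
  assume "t \<in> intv (x (k - 1)) (x k)"
  then have "u t * epow (F (x k)) p \<le> Phi t"
    by (intro u_F_le_Phi) (simp add: intv_def)
  then show "u t * S k t \<le> Phi t"
    using S_le_F by (meson mult_left_mono order_trans zero_le)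
qed

lemma SA_le_I: "SA \<le> 2 * I"
proof -
  have "SA \<le> (\<integral>\<^sup>+k. 2 * Int_ab Phi (x (k - 1)) (x k) \<partial>count_space Z)"
    unfolding SA_def
  proof (intro nn_integral_mono)
    fix k
    assume "k \<in> space (count_space Z)"
    then have "ennreal (2 powr real_of_int k) * epow (F (x k)) p \<le> 2 * Int_ab Phi (x (k - 1)) (x k)"
      by (intro two_powr_F_le_Int_Phi) simp
    then show "ennreal (2 powr real_of_int k) * epow (A k) p \<le> 2 * Int_ab Phi (x (k - 1)) (x k)"
      using p_pos A_le_F by (meson epow_mono mult_left_mono order_trans zero_le)
  qed
  also have "\<dots> = 2 * (\<integral>\<^sup>+k. Int_ab Phi (x (k - 1)) (x k) \<partial>count_space Z)"
    by (rule nn_integral_cmult) simp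
  also have "\<dots> \<le> 2 * I"
    unfolding I_def by (intro mult_left_mono sum_blocks_le_Int_ab Phi_measurable) simp
  finally show ?thesis .
qed

lemma SB_le_I: "SB \<le> I"
  unfolding SB_def I_def
  by (rule order_trans[OF nn_integral_mono[OF B_le_Int_Phi] sum_blocks_le_Int_ab[OF Phi_measurable]])

subsection \<open>The left-hand side is dominated by the right-hand side\<close>

lemma Phi_le_u_F: "x k < ereal t \<Longrightarrow> Phi t \<le> u t * epow (F (x k)) p"
  unfolding Phi_def using p_pos
  by (subst mult.commute) (intro mult_left_mono epow_mono F_antimono, auto)

lemma I_le_sum_F: "I \<le> (\<integral>\<^sup>+k. ennreal (2 powr real_of_int k) * epow (F (x k)) p \<partial>count_space Z)"
proof -
  have "I \<le> (\<integral>\<^sup>+k. Int_ab Phi (x k) (x (k + 1)) \<partial>count_space Z)"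
    unfolding I_def using exists_block by (intro Int_ab_le_sum_blocks Phi_measurable) auto
  also have "\<dots> \<le> (\<integral>\<^sup>+k. ennreal (2 powr real_of_int k) * epow (F (x k)) p \<partial>count_space Z)"
  proof (intro nn_integral_mono)
    fix k
    assume "k \<in> space (count_space Z)"
    then have k: "k \<in> Z"
      by simp
    have "Int_ab Phi (x k) (x (k + 1)) \<le> Int_ab (\<lambda>t. u t * epow (F (x k)) p) (x k) (x (k + 1))"
      by (intro Int_ab_mono Phi_le_u_F) (simp add: intv_def)
    also have "\<dots> = Int_ab u (x k) (x (k + 1)) * epow (F (x k)) p"
      by (rule Int_ab_multc[OF u_measurable])
    also have "\<dots> \<le> ennreal (2 powr real_of_int k) * epow (F (x k)) p"
      by (intro mult_right_mono Int_u_block_after[OF k]) simp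
    finally show "Int_ab Phi (x k) (x (k + 1)) \<le> ennreal (2 powr real_of_int k) * epow (F (x k)) p" .
  qed
  finally show ?thesis .
qed

lemma H_le_split:
  assumes "ereal t < c"
  shows "H (ereal t) \<le> Int_ab h (ereal t) c + H c"
proof (cases c)
  case (real c')
  then show ?thesis
    unfolding H_def using Int_ab_split[OF h_measurable, of "ereal t" c' \<infinity>] assms by simp
qed (use assms in \<open>simp_all add: H_def\<close>)

lemma Int_G_block_le: "Int_ab G (x j) (x (j + 1)) \<le> ennreal (2 powr q) * (A j + E j)"
proof -
  have "Int_ab G (x j) (x (j + 1)) \<le> Int_ab (\<lambda>t. ennreal (2 powr q) *
      (epow (Int_ab h (ereal t) (x (j + 1))) q * w t + epow (H (x (j + 1))) q * w t)) (x j) (x (j + 1))"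
  proof (intro Int_ab_mono)
    fix t
    assume "t \<in> intv (x j) (x (j + 1))"
    then have "H (ereal t) \<le> Int_ab h (ereal t) (x (j + 1)) + H (x (j + 1))"
      by (intro H_le_split) (simp add: intv_def)
    then have "epow (H (ereal t)) q
        \<le> ennreal (2 powr q) * (epow (Int_ab h (ereal t) (x (j + 1))) q + epow (H (x (j + 1))) q)"
      using q_pos by (meson epow_add_le epow_mono order_trans)
    from mult_right_mono[OF this, of "w t"] show "G t \<le> ennreal (2 powr q) *
        (epow (Int_ab h (ereal t) (x (j + 1))) q * w t + epow (H (x (j + 1))) q * w t)"
      by (simp add: G_def distrib_right mult.assoc)
  qed
  also have "\<dots> = ennreal (2 powr q) * (A j + E j)"
    unfolding A_def E_def using truncated_measurable w_measurable by (simp add: Int_ab_cmult Int_ab_add)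
  finally show ?thesis .
qed

lemma F_le_tail_sum:
  assumes "k \<in> Z"
  shows "F (x k) \<le> (\<integral>\<^sup>+j. ennreal (2 powr q) * (A j + E j) \<partial>count_space {j\<in>Z. k \<le> j})"
proof -
  obtain c where c: "c > 0" "x k = ereal c"
    using x_pos_real[OF assms] by blast
  have "F (x k) \<le> (\<integral>\<^sup>+j. Int_ab G (x j) (x (j + 1)) \<partial>count_space {j\<in>Z. k \<le> j})"
    unfolding F_def
  proof (rule Int_ab_le_sum_blocks[OF G_measurable])
    fix y
    assume y: "x k < ereal y" "\<forall>k\<in>Z. x k \<noteq> ereal y"
    with c have "y > 0"
      by simp
    with y assms show "\<exists>j\<in>{j\<in>Z. k \<le> j}. x j < ereal y \<and> ereal y < x (j + 1)"
      using exists_block_after by fastforce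
  qed
  also have "\<dots> \<le> (\<integral>\<^sup>+j. ennreal (2 powr q) * (A j + E j) \<partial>count_space {j\<in>Z. k \<le> j})"
    by (intro nn_integral_mono Int_G_block_le)
  finally show ?thesis .
qed

text \<open>Take $s = x_{j+1}$ in the supremum defining $S_j$.\<close>
lemma E_le_B:
  assumes "j \<in> Z"
  shows "ennreal (2 powr real_of_int j) * epow (E j) p \<le> 2 * B j"
proof (cases "j + 1 \<in> Z")
  case False
  then have "E j = 0"
    using x_after_last[OF assms False] q_pos by (simp add: E_def H_def Int_ab_empty)
  then show ?thesis
    using p_pos by simp
next
  case True
  obtain c where c: "x (j + 1) = ereal c"
    using x_pos_real[OF True] by blast
  define V where "V = epow (Int_ab w (x j) (ereal c)) p * epow (H (ereal c)) r"
  have E_eq: "epow (E j) p = V"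
    unfolding E_def V_def using c q_pos p_pos
    by (simp add: epow_mult epow_epow q_mult_p mult.commute)
  have "V \<le> S j t" if "t \<in> intv (x (j - 1)) (x j)" for t
  proof -
    have "ereal t < x j"
      using that by (simp add: intv_def)
    also have "x j < ereal c"
      using x_less_succ[OF assms] c by simp
    finally show ?thesis
      unfolding S_def V_def by (intro SUP_upper) (use c in auto)
  qed
  then have "Int_ab (\<lambda>t. u t * V) (x (j - 1)) (x j) \<le> B j"
    unfolding B_def by (intro Int_ab_mono mult_left_mono) auto
  moreover have "Int_ab (\<lambda>t. u t * V) (x (j - 1)) (x j) = ennreal (2 powr real_of_int (j - 1)) * V"
    using Int_ab_multc[OF u_measurable] Int_u_block_before[OF assms] by simp
  ultimately show ?thesis
    using E_eq by (metis ennreal_two_powr_eq_double mult.assoc mult_left_mono zero_le)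
qed

lemma tail_term_le:
  assumes "j \<in> Z"
  shows "ennreal (2 powr real_of_int j) * epow (ennreal (2 powr q) * (A j + E j)) p
    \<le> ennreal (2 powr r * 2 powr p) * (ennreal (2 powr real_of_int j) * epow (A j) p + 2 * B j)"
proof -
  have "epow (ennreal (2 powr q) * (A j + E j)) p = ennreal (2 powr r) * epow (A j + E j) p"
    using p_pos by (simp add: epow_cmult powr_powr q_mult_p)
  also have "\<dots> \<le> ennreal (2 powr r) * (ennreal (2 powr p) * (epow (A j) p + epow (E j) p))"
    by (intro mult_left_mono epow_add_le p_pos) simp
  finally have "ennreal (2 powr real_of_int j) * epow (ennreal (2 powr q) * (A j + E j)) p
      \<le> ennreal (2 powr real_of_int j) * (ennreal (2 powr r) * (ennreal (2 powr p) * (epow (A j) p + epow (E j) p)))"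
    by (rule mult_left_mono) simp
  also have "\<dots> = ennreal (2 powr r * 2 powr p) *
      (ennreal (2 powr real_of_int j) * epow (A j) p + ennreal (2 powr real_of_int j) * epow (E j) p)"
    by (simp add: ennreal_mult distrib_left ac_simps)
  also have "\<dots> \<le> ennreal (2 powr r * 2 powr p) * (ennreal (2 powr real_of_int j) * epow (A j) p + 2 * B j)"
    by (intro mult_left_mono add_left_mono E_le_B[OF assms]) simp
  finally show ?thesis .
qed

lemma I_le_SA_SB: "I \<le> ennreal (upper_const q r) * (SA + SB)"
proof -
  define c where "c = 2 powr r * 2 powr p"
  define D where "D j = ennreal (2 powr q) * (A j + E j)" for j
  have "I \<le> (\<integral>\<^sup>+k. ennreal (2 powr real_of_int k) * epow (F (x k)) p \<partial>count_space Z)"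
    by (rule I_le_sum_F)
  also have "\<dots> \<le> (\<integral>\<^sup>+k. ennreal (2 powr real_of_int k) *
      epow (\<integral>\<^sup>+j. D j \<partial>count_space {j\<in>Z. k \<le> j}) p \<partial>count_space Z)"
    unfolding D_def using p_pos by (intro nn_integral_mono mult_left_mono epow_mono F_le_tail_sum) auto
  also have "\<dots> \<le> ennreal (hardy_const p) *
      (\<integral>\<^sup>+j. ennreal (2 powr real_of_int j) * epow (D j) p \<partial>count_space Z)"
    by (rule discrete_hardy_inequality[OF p_pos])
  also have "\<dots> \<le> ennreal (hardy_const p) * (ennreal c * (2 * (SA + SB)))"
  proof (intro mult_left_mono)
    have "(\<integral>\<^sup>+j. ennreal (2 powr real_of_int j) * epow (D j) p \<partial>count_space Z)
        \<le> (\<integral>\<^sup>+j. ennreal c * (ennreal (2 powr real_of_int j) * epow (A j) p + 2 * B j) \<partial>count_space Z)"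
      unfolding c_def D_def by (intro nn_integral_mono tail_term_le) simp
    also have "\<dots> = ennreal c * (SA + 2 * SB)"
      unfolding SA_def SB_def by (simp add: nn_integral_add nn_integral_cmult)
    also have "\<dots> \<le> ennreal c * (2 * (SA + SB))"
      by (intro mult_left_mono) (auto simp: distrib_left mult_2 add_increasing2 add_right_mono)
    finally show "(\<integral>\<^sup>+j. ennreal (2 powr real_of_int j) * epow (D j) p \<partial>count_space Z)
        \<le> ennreal c * (2 * (SA + SB))" .
  qed simp
  also have "\<dots> = ennreal (upper_const q r) * (SA + SB)"
    using hardy_const_nonneg[of p]
    by (simp add: upper_const_def c_def p_def ennreal_mult mult.assoc mult.left_commute)
  finally show ?thesis .
qed

lemma norm_equivalence:
  "epow I (1 / r) \<le> ennreal (norm_equiv_const q r) * (lr_norm r Z a_seq + lr_norm r Z b_seq) \<and>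
   lr_norm r Z a_seq + lr_norm r Z b_seq \<le> ennreal (norm_equiv_const q r) * epow I (1 / r)"
proof -
  have "epow I (1 / r) \<le> ennreal (upper_const q r powr (1 / r) * 2 powr (1 / r)) * (epow SA (1 / r) + epow SB (1 / r))"
    by (rule epow_le_of_le_sum[OF r_pos upper_const_nonneg I_le_SA_SB])
  moreover have "epow SA (1 / r) + epow SB (1 / r) \<le> ennreal (2 powr (1 / r) + 1) * epow I (1 / r)"
    by (rule epow_sum_le_of_le[OF r_pos SA_le_I SB_le_I])
  moreover have "ennreal (upper_const q r powr (1 / r) * 2 powr (1 / r)) \<le> ennreal (norm_equiv_const q r)"
    "ennreal (2 powr (1 / r) + 1) \<le> ennreal (norm_equiv_const q r)"
    by (intro ennreal_leI; simp add: norm_equiv_const_def)+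
  ultimately show ?thesis
    unfolding lr_norm_a_seq lr_norm_b_seq by (meson mult_right_mono order_trans zero_le)
qed

end

theorem lemma4p3:
  fixes q r :: real
  assumes "0 < q" and "0 < r"
  shows "\<exists>C::real. 0 < C \<and>
    (\<forall>(u::real \<Rightarrow> ennreal) (w::real \<Rightarrow> ennreal) (x::int \<Rightarrow> ereal) (Z::int set) (h::real \<Rightarrow> ennreal).
       weight u \<longrightarrow> weight w \<longrightarrow> covering_seq u x Z \<longrightarrow> h \<in> borel_measurable lebesgue \<longrightarrow>
       (let LHS = epow (Int_ab (\<lambda>y. epow (Int_ab (\<lambda>t. epow (Int_ab h (ereal t) \<infinity>) q * w t)
                                            (ereal y) \<infinity>) (r / q) * u y) 0 \<infinity>) (1 / r);
            RHS = lr_norm r Z (\<lambda>k. ennreal (2 powr (real_of_int k / r)) *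
                      epow (Int_ab (\<lambda>s. epow (Int_ab h (ereal s) (x (k + 1))) q * w s)
                              (x k) (x (k + 1))) (1 / q))
                + lr_norm r Z (\<lambda>k. epow (Int_ab (\<lambda>t. u t *
                      (SUP s\<in>{s. ereal t < ereal s \<and> ereal s \<le> x (k + 1)}.
                         epow (Int_ab w (x k) (ereal s)) (r / q) * epow (Int_ab h (ereal s) \<infinity>) r))
                      (x (k - 1)) (x k)) (1 / r))
        in LHS \<le> ennreal C * RHS \<and> RHS \<le> ennreal C * LHS))"
  apply (intro exI[of _ "norm_equiv_const q r"] conjI allI impI norm_equiv_const_pos)
  subgoal premises prems for u w x Z h
  proof -
    interpret iterated_hardy_setting u x Z q r w h
      using assms prems by unfold_locales
    show ?thesis
      using norm_equivalence
      unfolding Let_def I_def Phi_def[abs_def] F_def G_def[abs_def] H_def p_def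
        a_seq_def[abs_def] b_seq_def[abs_def] A_def B_def S_def .
  qed
  done

end
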